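(* Let $B$ be an infinite-dimensional unital $\mathrm{C}^*$-algebra and $\phi$ a state on $B$ whose GNS representation is faithful. Then there is no constant $R>0$ such that $\|a^*a\|\le R\,\phi(a^*a)$ for all $a\in\ker\phi$. *)

theory Defs
  imports Complex_Main
begin

text \<open>The carrier is a type 'a that is a unital real Banach
algebra (class real_normed_algebra_1 + banach); the complex vector space structure is
given by an explicit scalar multiplication scaleC extending scaleR, and the
involution by star.\<close>

definition unital_cstar_algebra ::
  "(complex \<Rightarrow> 'a::{real_normed_algebra_1,banach} \<Rightarrow> 'a) \<Rightarrow> ('a \<Rightarrow> 'a) \<Rightarrow> bool" where
  "unital_cstar_algebra scaleC star \<longleftrightarrow>
     (\<forall>r a. scaleC (complex_of_real r) a = scaleR r a) \<and>
     (\<forall>c a b. scaleC c (a + b) = scaleC c a + scaleC c b) \<and>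
     (\<forall>c d a. scaleC (c + d) a = scaleC c a + scaleC d a) \<and>
     (\<forall>c d a. scaleC (c * d) a = scaleC c (scaleC d a)) \<and>
     (\<forall>a. scaleC 1 a = a) \<and>
     (\<forall>c a. norm (scaleC c a) = cmod c * norm a) \<and>
     (\<forall>c a b. scaleC c (a * b) = scaleC c a * b) \<and>
     (\<forall>c a b. scaleC c (a * b) = a * scaleC c b) \<and>
     (\<forall>a. star (star a) = a) \<and>
     (\<forall>a b. star (a + b) = star a + star b) \<and>
     (\<forall>c a. star (scaleC c a) = scaleC (cnj c) (star a)) \<and>
     (\<forall>a b. star (a * b) = star b * star a) \<and>
     (\<forall>a. norm (star a * a) = (norm a)\<^sup>2)"

definition complex_span ::
  "(complex \<Rightarrow> 'a::real_vector \<Rightarrow> 'a) \<Rightarrow> 'a set \<Rightarrow> 'a set" where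
  "complex_span scaleC S = {x. \<exists>c. x = (\<Sum>s\<in>S. scaleC (c s) s)}"

definition infinite_dimensional ::
  "(complex \<Rightarrow> 'a::real_vector \<Rightarrow> 'a) \<Rightarrow> bool" where
  "infinite_dimensional scaleC \<longleftrightarrow>
     (\<forall>S. finite S \<longrightarrow> complex_span scaleC S \<noteq> UNIV)"

definition is_state ::
  "(complex \<Rightarrow> 'a::{real_normed_algebra_1,banach} \<Rightarrow> 'a) \<Rightarrow> ('a \<Rightarrow> 'a) \<Rightarrow> ('a \<Rightarrow> complex) \<Rightarrow> bool" where
  "is_state scaleC star \<phi> \<longleftrightarrow>
     (\<forall>a b. \<phi> (a + b) = \<phi> a + \<phi> b) \<and>
     (\<forall>c a. \<phi> (scaleC c a) = c * \<phi> a) \<and>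
     (\<forall>a. Im (\<phi> (star a * a)) = 0 \<and> Re (\<phi> (star a * a)) \<ge> 0) \<and>
     \<phi> 1 = 1"

text \<open>The GNS pre-Hilbert space is B / N_phi with
N_phi = {x. phi(x* x) = 0} and inner product <[x],[y]> = phi(y* x);
pi_phi(a)[b] = [a b]. Hence pi_phi(a) = 0 (on the dense subspace, hence on the
completion) iff a b lies in N_phi for every b.\<close>

definition gns_null_space :: "('a \<Rightarrow> 'a) \<Rightarrow> ('a::ring \<Rightarrow> complex) \<Rightarrow> 'a set" where
  "gns_null_space star \<phi> = {x. \<phi> (star x * x) = 0}"

definition gns_kernel :: "('a \<Rightarrow> 'a) \<Rightarrow> ('a::ring \<Rightarrow> complex) \<Rightarrow> 'a set" where
  "gns_kernel star \<phi> = {a. \<forall>b. a * b \<in> gns_null_space star \<phi>}"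

definition gns_faithful :: "('a \<Rightarrow> 'a) \<Rightarrow> ('a::ring \<Rightarrow> complex) \<Rightarrow> bool" where
  "gns_faithful star \<phi> \<longleftrightarrow> gns_kernel star \<phi> = {0}"

end

theory Submission
  imports Defs "HOL-Analysis.Analysis"
begin

text \<open>If \<open>||a* a|| \<le> R \<phi>(a* a)\<close> on the kernel of \<open>\<phi>\<close>, then writing \<open>a = (a - \<phi>(a)1) + \<phi>(a)1\<close>
gives \<open>||a||\<^sup>2 \<le> K \<phi>(a* a)\<close> for all \<open>a\<close>, with \<open>K = (sqrt R + 1)\<^sup>2\<close>. For self-adjoint \<open>h\<close>
of norm 1 the values \<open>\<phi>(h^(2n))\<close> decrease, so by this bound the powers of \<open>h\<^sup>2\<close> form a
Cauchy sequence, and their limit is a nonzero projection absorbed by \<open>h\<^sup>2\<close>. Consequently a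
projection \<open>q\<close> whose corner \<open>qBq\<close> contains a self-adjoint element that is not a real
multiple of \<open>q\<close> splits into two nonzero orthogonal projections. As \<open>\<phi>(p) \<ge> 1/K\<close> for
every nonzero projection \<open>p\<close>, a partition of unity into orthogonal projections has at most
\<open>K\<close> members; in a maximal one every corner \<open>pBp\<close> is \<open>\<complex>p\<close>, so every \<open>pBq\<close> is at most
one-dimensional and \<open>B\<close>, the sum of the \<open>pBq\<close>, is finite-dimensional.\<close>

lemma norm_square_diff_le:
  fixes t u :: "'a::real_normed_algebra"
  shows "norm (t * t - u * u) \<le> (norm t + norm u) * norm (t - u)"
proof -
  have "t * t - u * u = t * (t - u) + (t - u) * u"
    by (simp add: algebra_simps)
  then have "norm (t * t - u * u) \<le> norm t * norm (t - u) + norm (t - u) * norm u"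
    by (metis add_mono norm_mult_ineq norm_triangle_le)
  then show ?thesis
    by (simp add: algebra_simps)
qed

lemma power_limit_idempotent:
  fixes p e :: "'a::real_normed_algebra_1"
  assumes lim: "(\<lambda>n. p ^ n) \<longlonglongrightarrow> e"
  shows "e * e = e" and "p * e = e"
proof -
  have "(\<lambda>n. p * p ^ n) \<longlonglongrightarrow> p * e"
    using lim by (intro tendsto_mult tendsto_const)
  then show "p * e = e"
    using LIMSEQ_Suc[OF lim] LIMSEQ_unique by simp
  have "(\<lambda>n. p ^ n * p ^ n) \<longlonglongrightarrow> e * e"
    using lim lim by (rule tendsto_mult)
  moreover have "(\<lambda>n. p ^ n * p ^ n) = (\<lambda>n. p ^ n) \<circ> (\<lambda>n. 2 * n)"
    by (auto simp: power_add[symmetric] mult_2)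
  moreover have "((\<lambda>n. p ^ n) \<circ> (\<lambda>n. 2 * n)) \<longlonglongrightarrow> e"
    by (rule LIMSEQ_subseq_LIMSEQ[OF lim]) (simp add: strict_mono_def)
  ultimately show "e * e = e"
    using LIMSEQ_unique by metis
qed

lemma power_limit_absorbs:
  fixes p q e :: "'a::real_normed_algebra_1"
  assumes lim: "(\<lambda>n. p ^ n) \<longlonglongrightarrow> e" and "q * p = p"
  shows "q * e = e"
proof -
  have lim_Suc: "(\<lambda>n. p ^ Suc n) \<longlonglongrightarrow> e"
    using LIMSEQ_Suc[OF lim] .
  then have "(\<lambda>n. q * p ^ Suc n) \<longlonglongrightarrow> q * e"
    by (intro tendsto_mult tendsto_const)
  moreover have "q * p ^ Suc n = p ^ Suc n" for n
    using \<open>q * p = p\<close> by (simp add: mult.assoc[symmetric])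
  ultimately show ?thesis
    using lim_Suc LIMSEQ_unique by simp
qed

lemma half_square_map_contraction:
  fixes x :: "'a::real_normed_algebra"
  assumes "norm x + r * r \<le> 2 * r"
  shows "(\<lambda>t. (1/2) *\<^sub>R (x + t * t)) ` cball 0 r \<subseteq> cball 0 r"
    and "\<And>t u. t \<in> cball 0 r \<Longrightarrow> u \<in> cball 0 r \<Longrightarrow>
      dist ((1/2) *\<^sub>R (x + t * t)) ((1/2) *\<^sub>R (x + u * u)) \<le> r * dist t u"
proof clarify
  fix t :: 'a assume "t \<in> cball 0 r"
  then have "norm (t * t) \<le> r * r"
    using norm_mult_ineq[of t t] mult_mono[of "norm t" r "norm t" r] by force
  then have "norm (x + t * t) \<le> 2 * r"
    using norm_triangle_ineq[of x "t * t"] assms by linarith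
  then show "(1/2) *\<^sub>R (x + t * t) \<in> cball 0 r"
    by simp
next
  fix t u :: 'a assume "t \<in> cball 0 r" "u \<in> cball 0 r"
  have "dist ((1/2) *\<^sub>R (x + t * t)) ((1/2) *\<^sub>R (x + u * u)) = norm (t * t - u * u) / 2"
    by (simp add: dist_norm algebra_simps flip: scaleR_diff_right)
  also have "\<dots> \<le> (norm t + norm u) * norm (t - u) / 2"
    by (simp add: divide_right_mono norm_square_diff_le)
  also have "\<dots> \<le> (r + r) * norm (t - u) / 2"
    using \<open>t \<in> cball 0 r\<close> \<open>u \<in> cball 0 r\<close>
    by (intro divide_right_mono mult_right_mono add_mono) auto
  finally show "dist ((1/2) *\<^sub>R (x + t * t)) ((1/2) *\<^sub>R (x + u * u)) \<le> r * dist t u"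
    by (simp add: dist_norm)
qed

locale cstar_algebra =
  fixes scaleC :: "complex \<Rightarrow> 'a::{real_normed_algebra_1,banach} \<Rightarrow> 'a"
    and star :: "'a \<Rightarrow> 'a"
  assumes unital_cstar: "unital_cstar_algebra scaleC star"
begin

lemma scaleC_of_real: "scaleC (complex_of_real r) a = r *\<^sub>R a"
  and scaleC_add_right: "scaleC c (a + b) = scaleC c a + scaleC c b"
  and scaleC_add_left: "scaleC (c + d) a = scaleC c a + scaleC d a"
  and scaleC_scaleC: "scaleC c (scaleC d a) = scaleC (c * d) a"
  and scaleC_one: "scaleC 1 a = a"
  and norm_scaleC: "norm (scaleC c a) = cmod c * norm a"
  and mult_scaleC_left: "scaleC c a * b = scaleC c (a * b)"
  and mult_scaleC_right: "a * scaleC c b = scaleC c (a * b)"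
  and star_star [simp]: "star (star a) = a"
  and star_add: "star (a + b) = star a + star b"
  and star_scaleC: "star (scaleC c a) = scaleC (cnj c) (star a)"
  and star_mult: "star (a * b) = star b * star a"
  and norm_star_mult_self: "norm (star a * a) = (norm a)\<^sup>2"
  using unital_cstar unfolding unital_cstar_algebra_def by metis+

lemma scaleC_zero_left [simp]: "scaleC 0 a = 0"
  using scaleC_of_real[of 0 a] by simp

lemma scaleC_zero_right [simp]: "scaleC c 0 = 0"
  using scaleC_add_right[of c 0 0] by simp

lemma scaleC_minus_left: "scaleC (- c) a = - scaleC c a"
  using scaleC_add_left[of c "- c" a] by (simp add: add_eq_0_iff)

lemma scaleC_diff_right: "scaleC c (a - b) = scaleC c a - scaleC c b"
  using scaleC_add_right[of c "a - b" b] by (simp add: algebra_simps)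

lemma star_zero [simp]: "star 0 = 0"
  using star_add[of 0 0] by simp

lemma star_diff: "star (a - b) = star a - star b"
  using star_add[of "a - b" b] by (simp add: algebra_simps)

lemma star_one [simp]: "star 1 = 1"
  using star_mult[of "star 1" 1] by simp

lemma star_scaleR: "star (r *\<^sub>R a) = r *\<^sub>R star a"
  using star_scaleC[of "complex_of_real r" a] by (simp add: scaleC_of_real)

lemma star_power: "star (a ^ n) = star a ^ n"
  by (induction n) (simp_all add: star_mult power_commutes)

lemma norm_star [simp]: "norm (star a) = norm a"
proof -
  have le: "norm b \<le> norm (star b)" for b
  proof (cases "b = 0")
    case False
    have "(norm b)\<^sup>2 \<le> norm (star b) * norm b"
      using norm_star_mult_self[of b] norm_mult_ineq[of "star b" b] by simp
    with False show ?thesis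
      by (simp add: power2_eq_square)
  qed simp
  show ?thesis
    using le[of a] le[of "star a"] by simp
qed

lemma bounded_linear_star: "bounded_linear star"
  by (rule bounded_linear_intro[where K = 1]) (simp_all add: star_add star_scaleR)

definition selfadjoint :: "'a \<Rightarrow> bool" where
  "selfadjoint x \<longleftrightarrow> star x = x"

definition projection :: "'a \<Rightarrow> bool" where
  "projection p \<longleftrightarrow> star p = p \<and> p * p = p"

definition corner :: "'a \<Rightarrow> 'a \<Rightarrow> 'a set" where
  "corner p q = {x. p * x = x \<and> x * q = x}"

lemma norm_projection:
  assumes "projection p" and "p \<noteq> 0"
  shows "norm p = 1"
proof -
  have "norm p = (norm p)\<^sup>2"
    using norm_star_mult_self[of p] assms(1) by (simp add: projection_def)
  with assms(2) show ?thesis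
    by (simp add: power2_eq_square)
qed

lemma norm_power_two_power:
  assumes "selfadjoint p"
  shows "norm (p ^ (2 ^ k)) = norm p ^ (2 ^ k)"
proof (induction k)
  case (Suc k)
  have "p ^ (2 ^ Suc k) = star (p ^ (2 ^ k)) * p ^ (2 ^ k)"
    using assms by (simp add: selfadjoint_def star_power power_add[symmetric] mult_2)
  then show ?case
    using Suc by (simp add: norm_star_mult_self power_mult[symmetric] mult.commute)
qed simp

lemma mult_mem_corner:
  assumes "a \<in> corner r s" and "b \<in> corner s t"
  shows "a * b \<in> corner r t"
proof -
  have "r * a = a" "b * t = b"
    using assms by (simp_all add: corner_def)
  then have "r * (a * b) = a * b" "a * b * t = a * b"
    by (simp_all add: mult.assoc flip: mult.assoc[of r])
  then show ?thesis
    by (simp add: corner_def)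
qed

lemma star_mem_corner:
  assumes "projection p" "projection q" "x \<in> corner p q"
  shows "star x \<in> corner q p"
proof -
  have "star (p * x) = star x" "star (x * q) = star x"
    using assms(3) by (simp_all add: corner_def)
  with assms(1,2) show ?thesis
    by (simp add: corner_def projection_def star_mult)
qed

lemma selfadjoint_sqrt_one_minus:
  assumes "selfadjoint x" and "norm x < 1"
  obtains s where "selfadjoint s" and "s * s = 1 - x"
proof -
  define r where "r = 1 - sqrt (1 - norm x)"
  have r: "0 \<le> r" "r < 1"
    using assms(2) by (auto simp: r_def)
  have "(sqrt (1 - norm x))\<^sup>2 = 1 - norm x"
    using assms(2) by simp
  then have r_bound: "norm x + r * r \<le> 2 * r"
    by (simp add: r_def algebra_simps power2_eq_square)
  \<comment> \<open>\<open>s = 1 - t\<close> for the solution \<open>t\<close> of \<open>t = (x + t\<^sup>2)/2\<close> in the ball of radius \<open>r\<close>\<close>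
  define F where "F = (\<lambda>t. (1/2) *\<^sub>R (x + t * t))"
  have "\<exists>!t. t \<in> cball 0 r \<and> F t = t"
    unfolding F_def
    by (rule Banach_fix[OF _ _ r half_square_map_contraction[OF r_bound]])
      (use r in \<open>auto simp: complete_eq_closed\<close>)
  then obtain t where t: "t \<in> cball 0 r" "F t = t"
    and unique: "\<And>u. u \<in> cball 0 r \<Longrightarrow> F u = u \<Longrightarrow> u = t"
    by blast
  have "F (star t) = star (F t)"
    using assms(1) by (simp add: F_def selfadjoint_def star_scaleR star_add star_mult)
  then have "star t = t"
    using t unique[of "star t"] by simp
  moreover have "x + t * t = 2 *\<^sub>R t"
    using arg_cong[OF t(2), of "scaleR 2"] by (simp add: F_def)
  ultimately have "selfadjoint (1 - t)" and "(1 - t) * (1 - t) = 1 - x"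
    by (simp_all add: selfadjoint_def star_diff algebra_simps scaleR_2)
  then show ?thesis
    by (rule that)
qed

lemma star_eq_zero_iff [simp]: "star a = 0 \<longleftrightarrow> a = 0"
  using norm_star[of a] by (metis norm_eq_zero)

lemma star_mult_self_eq_zero_iff: "star a * a = 0 \<longleftrightarrow> a = 0"
  using norm_star_mult_self[of a] by auto

lemma scaleC_mem_complex_span:
  assumes "finite Y" and "y \<in> Y"
  shows "scaleC c y \<in> complex_span scaleC Y"
proof -
  have "(\<Sum>s\<in>Y. scaleC (if s = y then c else 0) s) = (\<Sum>s\<in>Y. if s = y then scaleC c s else 0)"
    by (rule sum.cong) auto
  also have "\<dots> = scaleC c y"
    using assms by simp
  finally show ?thesis
    unfolding complex_span_def by (intro CollectI exI[of _ "\<lambda>s. if s = y then c else 0"]) simp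
qed

lemma complex_span_singleton: "complex_span scaleC {y} = range (\<lambda>c. scaleC c y)"
  using scaleC_mem_complex_span[of "{y}" y] by (auto simp: complex_span_def)

lemma complex_span_sum:
  assumes "\<And>i. i \<in> I \<Longrightarrow> f i \<in> complex_span scaleC Y"
  shows "sum f I \<in> complex_span scaleC Y"
proof -
  have zero: "0 \<in> complex_span scaleC Y"
    unfolding complex_span_def by (intro CollectI exI[of _ "\<lambda>_. 0"]) simp
  have add: "x + z \<in> complex_span scaleC Y"
    if x: "x \<in> complex_span scaleC Y" and z: "z \<in> complex_span scaleC Y" for x z
  proof -
    obtain c d where "x = (\<Sum>s\<in>Y. scaleC (c s) s)" "z = (\<Sum>s\<in>Y. scaleC (d s) s)"
      using x z unfolding complex_span_def by blast
    then have "x + z = (\<Sum>s\<in>Y. scaleC (c s + d s) s)"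
      by (simp add: scaleC_add_left sum.distrib)
    then show ?thesis
      by (auto simp: complex_span_def)
  qed
  from assms show ?thesis
    by (induction I rule: infinite_finite_induct) (simp_all add: zero add)
qed

lemma corner_in_span_if_selfadjoint_real:
  assumes q: "projection q"
    and real: "\<And>k. selfadjoint k \<Longrightarrow> k \<in> corner q q \<Longrightarrow> \<exists>r. k = r *\<^sub>R q"
  shows "corner q q \<subseteq> complex_span scaleC {q}"
proof
  fix x assume x: "x \<in> corner q q"
  then have x_star: "star x \<in> corner q q"
    using star_mem_corner q by blast
  define re where "re = (1/2) *\<^sub>R (x + star x)"
  define im where "im = scaleC (\<i>/2) (star x - x)"
  have "selfadjoint re"
    by (simp add: re_def selfadjoint_def star_scaleR star_add add.commute)
  moreover have "re \<in> corner q q"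
    using x x_star by (simp add: re_def corner_def algebra_simps)
  ultimately obtain r1 where r1: "re = r1 *\<^sub>R q"
    using real by blast
  have "cnj (\<i>/2) = - (\<i>/2)"
    by (simp add: complex_eq_iff)
  then have "selfadjoint im"
    by (simp add: im_def selfadjoint_def star_scaleC star_diff scaleC_minus_left scaleC_diff_right)
  moreover have "im \<in> corner q q"
    using x x_star
    by (simp add: im_def corner_def mult_scaleC_left mult_scaleC_right algebra_simps scaleC_diff_right)
  ultimately obtain r2 where r2: "im = r2 *\<^sub>R q"
    using real by blast
  have "\<i> * (\<i>/2) = complex_of_real (- 1/2)"
    by (simp add: complex_eq_iff)
  then have "scaleC \<i> im = (- 1/2) *\<^sub>R (star x - x)"
    unfolding im_def scaleC_scaleC by (simp only: scaleC_of_real)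
  then have "scaleC \<i> im = (1/2) *\<^sub>R (x - star x)"
    by (simp add: algebra_simps)
  then have "x = re + scaleC \<i> im"
    by (simp add: re_def flip: scaleR_add_right scaleR_2)
  also have "\<dots> = scaleC (complex_of_real r1 + \<i> * complex_of_real r2) q"
    by (simp add: r1 r2 scaleC_add_left scaleC_scaleC flip: scaleC_of_real)
  finally show "x \<in> complex_span scaleC {q}"
    by (simp add: complex_span_singleton)
qed

lemma corner_in_span_single:
  assumes p: "projection p" and q: "projection q"
    and p_scalar: "corner p p \<subseteq> complex_span scaleC {p}"
    and q_scalar: "corner q q \<subseteq> complex_span scaleC {q}"
  shows "\<exists>y. corner p q \<subseteq> complex_span scaleC {y}"
proof (cases "corner p q \<subseteq> {0}")
  case True
  then show ?thesis
    by (intro exI[of _ 0]) (auto simp: complex_span_singleton)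
next
  case False
  then obtain y where y: "y \<in> corner p q" "y \<noteq> 0"
    by blast
  have y_star: "star y \<in> corner q p"
    using star_mem_corner p q y(1) by blast
  obtain m where m: "star y * y = scaleC m q"
    using q_scalar mult_mem_corner[OF y_star y(1)] by (auto simp: complex_span_singleton)
  have "m \<noteq> 0"
    using m y(2) star_mult_self_eq_zero_iff[of y] by auto
  have "x \<in> range (\<lambda>c. scaleC c y)" if x: "x \<in> corner p q" for x
  proof -
    obtain l where l: "star y * x = scaleC l q"
      using q_scalar mult_mem_corner[OF y_star x] by (auto simp: complex_span_singleton)
    \<comment> \<open>\<open>z\<close> is orthogonal to \<open>y\<close>, so \<open>z z*\<close>, a multiple of \<open>p\<close>, is annihilated by \<open>y\<close>
      and vanishes\<close>
    define z where "z = x - scaleC (l / m) y"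
    have "star y * z = 0"
      using \<open>m \<noteq> 0\<close>
      by (simp add: z_def algebra_simps mult_scaleC_right l m scaleC_diff_right scaleC_scaleC)
    moreover have "star (star y * z) = star z * y"
      by (simp add: star_mult)
    ultimately have "star z * y = 0"
      by simp
    have z: "z \<in> corner p q"
      using x y(1) by (simp add: z_def corner_def algebra_simps mult_scaleC_left mult_scaleC_right scaleC_diff_right)
    then obtain \<alpha> where \<alpha>: "z * star z = scaleC \<alpha> p"
      using p_scalar mult_mem_corner[OF z star_mem_corner[OF p q z]] by (auto simp: complex_span_singleton)
    have "scaleC \<alpha> y = z * star z * y"
      using \<alpha> y(1) by (simp add: mult_scaleC_left corner_def)
    also have "\<dots> = 0"
      by (simp add: mult.assoc \<open>star z * y = 0\<close>)
    finally have "scaleC \<alpha> y = 0" .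
    then have "z * star z = 0"
      using \<alpha> y(2) norm_scaleC[of \<alpha> y] by simp
    then have "z = 0"
      using star_mult_self_eq_zero_iff[of "star z"] by simp
    then show ?thesis
      by (simp add: z_def)
  qed
  then show ?thesis
    by (auto simp: complex_span_singleton)
qed

definition orthogonal_split :: "'a \<Rightarrow> 'a \<Rightarrow> 'a \<Rightarrow> bool" where
  "orthogonal_split q e1 e2 \<longleftrightarrow>
     projection e1 \<and> e1 \<noteq> 0 \<and> projection e2 \<and> e2 \<noteq> 0 \<and> e1 + e2 = q \<and> e1 * e2 = 0"

lemma orthogonal_split_subprojection:
  assumes q: "projection q" and e: "projection e" "q * e = e" "e \<noteq> 0" "e \<noteq> q"
  shows "orthogonal_split q e (q - e)"
proof -
  have "e * q = star (q * e)"
    using q e(1) by (simp add: projection_def star_mult)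
  also have "\<dots> = e"
    using e by (simp add: projection_def)
  finally have "e * q = e" .
  with q e show ?thesis
    by (simp add: orthogonal_split_def projection_def star_diff algebra_simps)
qed

lemma orthogonal_split_reflection:
  assumes q: "projection q" and h: "selfadjoint h" "h \<in> corner q q" "h * h = q"
    and "h \<noteq> q" "h \<noteq> - q"
  shows "orthogonal_split q ((1/2) *\<^sub>R (q + h)) ((1/2) *\<^sub>R (q - h))"
proof -
  have "(q + h) * (q + h) = 2 *\<^sub>R (q + h)" "(q - h) * (q - h) = 2 *\<^sub>R (q - h)"
    "(q + h) * (q - h) = 0"
    using q h by (simp_all add: projection_def corner_def algebra_simps scaleR_2)
  moreover have "q + h \<noteq> 0" "q - h \<noteq> 0"
    using assms(5,6) by (auto simp: add_eq_0_iff)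
  ultimately show ?thesis
    using q h by (simp add: orthogonal_split_def projection_def selfadjoint_def
        star_scaleR star_add star_diff flip: scaleR_add_right)
qed

lemma orthogonal_split_in_corner:
  assumes "orthogonal_split q e1 e2"
  shows "e1 \<in> corner q q" and "e2 \<in> corner q q" and "e2 * e1 = 0"
proof -
  have "star e1 = e1" "star e2 = e2" "e1 * e2 = 0"
    using assms by (simp_all add: orthogonal_split_def projection_def)
  then show "e2 * e1 = 0"
    by (metis star_mult star_zero)
  moreover have "e1 * e1 = e1" "e2 * e2 = e2" "e1 * e2 = 0" "q = e1 + e2"
    using assms by (simp_all add: orthogonal_split_def projection_def)
  ultimately show "e1 \<in> corner q q" "e2 \<in> corner q q"
    by (simp_all add: corner_def distrib_left distrib_right)
qed

definition projection_partition :: "'a set \<Rightarrow> bool" where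
  "projection_partition F \<longleftrightarrow> finite F \<and> (\<forall>p\<in>F. projection p \<and> p \<noteq> 0) \<and>
     pairwise (\<lambda>p p'. p * p' = 0) F \<and> \<Sum>F = 1"

lemma projection_partition_one: "projection_partition {1}"
  by (simp add: projection_partition_def projection_def)

lemma projection_partition_refine:
  assumes F: "projection_partition F" and "q \<in> F" and split: "orthogonal_split q e1 e2"
  defines "G \<equiv> insert e1 (insert e2 (F - {q}))"
  shows "projection_partition G" and "card G = Suc (card F)"
proof -
  have "finite F" and orth: "\<And>p p'. p \<in> F \<Longrightarrow> p' \<in> F \<Longrightarrow> p \<noteq> p' \<Longrightarrow> p * p' = 0"
    using F by (auto simp: projection_partition_def pairwise_def)
  have orth_corner: "p * e = 0 \<and> e * p = 0" if "p \<in> F - {q}" "e \<in> corner q q" for p e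
  proof -
    have "p * e = (p * q) * e" "e * p = e * (q * p)"
      using that(2) by (simp_all add: corner_def mult.assoc flip: mult.assoc[of e])
    then show ?thesis
      using orth[of p q] orth[of q p] that(1) \<open>q \<in> F\<close> by auto
  qed
  note e = split[unfolded orthogonal_split_def projection_def] orthogonal_split_in_corner[OF split]
  have "e1 \<notin> F - {q}" "e2 \<notin> F - {q}" "e1 \<noteq> e2"
    using orth_corner[of e1 e1] orth_corner[of e2 e2] e by auto
  moreover have "card F > 0"
    using \<open>finite F\<close> \<open>q \<in> F\<close> card_gt_0_iff by blast
  ultimately show "card G = Suc (card F)"
    using \<open>finite F\<close> \<open>q \<in> F\<close> by (simp add: G_def card_Diff_singleton)
  have "\<Sum>G = (e1 + e2) + \<Sum>(F - {q})"
    using \<open>e1 \<notin> F - {q}\<close> \<open>e2 \<notin> F - {q}\<close> \<open>e1 \<noteq> e2\<close> \<open>finite F\<close> by (simp add: G_def add.assoc)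
  also have "\<dots> = \<Sum>F"
    using e \<open>finite F\<close> \<open>q \<in> F\<close> by (simp add: sum.remove)
  finally show "projection_partition G"
    using F e orth_corner by (auto simp: projection_partition_def pairwise_def projection_def G_def)
qed

lemma finite_dimensional_if_corners_in_lines:
  assumes F: "projection_partition F"
    and lines: "\<And>p q. p \<in> F \<Longrightarrow> q \<in> F \<Longrightarrow> \<exists>y. corner p q \<subseteq> complex_span scaleC {y}"
  shows "\<not> infinite_dimensional scaleC"
proof -
  obtain y where y: "\<And>p q. p \<in> F \<Longrightarrow> q \<in> F \<Longrightarrow> corner p q \<subseteq> complex_span scaleC {y p q}"
    using lines by metis
  define Y where "Y = (\<lambda>(p, q). y p q) ` (F \<times> F)"
  have "finite Y"
    using F by (simp add: Y_def projection_partition_def)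
  have "a \<in> complex_span scaleC Y" for a
  proof -
    have "a = \<Sum>F * a * \<Sum>F"
      using F by (simp add: projection_partition_def)
    also have "\<dots> = (\<Sum>p\<in>F. \<Sum>q\<in>F. p * a * q)"
      unfolding sum_distrib_left sum_distrib_right by (rule sum.swap)
    finally have a_sum: "a = (\<Sum>p\<in>F. \<Sum>q\<in>F. p * a * q)" .
    have "p * a * q \<in> complex_span scaleC Y" if pq: "p \<in> F" "q \<in> F" for p q
    proof -
      have "p * p = p" "q * q = q"
        using F pq by (simp_all add: projection_partition_def projection_def)
      then have "p * a * q \<in> corner p q"
        by (simp add: corner_def mult.assoc) (simp flip: mult.assoc)
      then obtain c where "p * a * q = scaleC c (y p q)"
        using y[OF pq] by (auto simp: complex_span_singleton)
      moreover have "y p q \<in> Y"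
        using pq by (auto simp: Y_def)
      ultimately show ?thesis
        using scaleC_mem_complex_span[OF \<open>finite Y\<close>] by simp
    qed
    then show ?thesis
      by (subst a_sum) (intro complex_span_sum)
  qed
  with \<open>finite Y\<close> show ?thesis
    unfolding infinite_dimensional_def by blast
qed

end

locale cstar_state = cstar_algebra +
  fixes \<phi> :: "'a \<Rightarrow> complex"
  assumes state: "is_state scaleC star \<phi>"
begin

lemma phi_add: "\<phi> (a + b) = \<phi> a + \<phi> b"
  and phi_scaleC: "\<phi> (scaleC c a) = c * \<phi> a"
  and phi_star_mult_self_real: "Im (\<phi> (star a * a)) = 0"
  and phi_star_mult_self_nonneg: "0 \<le> Re (\<phi> (star a * a))"
  and phi_one: "\<phi> 1 = 1"
  using state unfolding is_state_def by metis+

lemma phi_zero [simp]: "\<phi> 0 = 0"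
  using phi_add[of 0 0] by simp

lemma phi_diff: "\<phi> (a - b) = \<phi> a - \<phi> b"
  using phi_add[of "a - b" b] by simp

lemma phi_scaleR: "\<phi> (r *\<^sub>R a) = complex_of_real r * \<phi> a"
  using phi_scaleC[of "complex_of_real r" a] by (simp add: scaleC_of_real)

lemma phi_sum: "\<phi> (sum f I) = (\<Sum>i\<in>I. \<phi> (f i))"
  by (induction I rule: infinite_finite_induct) (simp_all add: phi_add)

lemma phi_star: "\<phi> (star a) = cnj (\<phi> a)"
proof -
  have "star (1 + a) * (1 + a) = 1 + a + star a + star a * a"
    by (simp add: star_add algebra_simps)
  then have im: "Im (\<phi> a) + Im (\<phi> (star a)) = 0"
    using phi_star_mult_self_real[of "1 + a"] phi_star_mult_self_real[of a] by (simp add: phi_add phi_one)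
  have "scaleC (- \<i>) (star a) * scaleC \<i> a = star a * a"
    by (simp add: mult_scaleC_left mult_scaleC_right scaleC_scaleC scaleC_one)
  then have "star (1 + scaleC \<i> a) * (1 + scaleC \<i> a) = 1 + scaleC \<i> a + scaleC (- \<i>) (star a) + star a * a"
    by (simp add: star_add star_scaleC algebra_simps)
  then have re: "Re (\<phi> a) - Re (\<phi> (star a)) = 0"
    using phi_star_mult_self_real[of "1 + scaleC \<i> a"] phi_star_mult_self_real[of a]
    by (simp add: phi_add phi_scaleC phi_one)
  from im re show ?thesis
    by (simp add: complex_eq_iff)
qed

lemma phi_sandwich_le_of_norm_less:
  assumes "selfadjoint x" and "norm x < c"
  shows "Re (\<phi> (star y * x * y)) \<le> c * Re (\<phi> (star y * y))"
proof -
  have "c > 0"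
    using assms(2) norm_ge_zero[of x] by linarith
  have "selfadjoint ((1/c) *\<^sub>R x)" "norm ((1/c) *\<^sub>R x) < 1"
    using assms \<open>c > 0\<close> by (simp_all add: selfadjoint_def star_scaleR)
  then obtain s where s: "selfadjoint s" "s * s = 1 - (1/c) *\<^sub>R x"
    by (rule selfadjoint_sqrt_one_minus)
  have "star (s * y) * (s * y) = star y * (s * s) * y"
    using s(1) by (simp add: selfadjoint_def star_mult mult.assoc)
  also have "\<dots> = star y * y - (1/c) *\<^sub>R (star y * x * y)"
    by (simp add: s(2) algebra_simps)
  finally have "0 \<le> Re (\<phi> (star y * y)) - (1/c) * Re (\<phi> (star y * x * y))"
    using phi_star_mult_self_nonneg[of "s * y"] by (simp add: phi_diff phi_scaleR)
  with \<open>c > 0\<close> show ?thesis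
    by (simp add: field_simps)
qed

lemma phi_sandwich_le:
  assumes "selfadjoint x"
  shows "Re (\<phi> (star y * x * y)) \<le> norm x * Re (\<phi> (star y * y))"
proof (rule field_le_epsilon)
  fix \<epsilon> :: real assume "0 < \<epsilon>"
  define P where "P = Re (\<phi> (star y * y))"
  have "0 \<le> P"
    by (simp add: P_def phi_star_mult_self_nonneg)
  then have "norm x < norm x + \<epsilon> / (P + 1)"
    using \<open>0 < \<epsilon>\<close> by simp
  with assms have "Re (\<phi> (star y * x * y)) \<le> (norm x + \<epsilon> / (P + 1)) * P"
    unfolding P_def by (rule phi_sandwich_le_of_norm_less)
  also have "\<dots> \<le> norm x * P + \<epsilon>"
    using \<open>0 < \<epsilon>\<close> \<open>0 \<le> P\<close> by (simp add: field_simps)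
  finally show "Re (\<phi> (star y * x * y)) \<le> norm x * Re (\<phi> (star y * y)) + \<epsilon>"
    by (simp add: P_def)
qed

lemma norm_sq_le_of_kernel_bound:
  assumes "0 \<le> R"
    and kernel: "\<And>b. \<phi> b = 0 \<Longrightarrow> norm (star b * b) \<le> R * Re (\<phi> (star b * b))"
  shows "(norm a)\<^sup>2 \<le> (sqrt R + 1)\<^sup>2 * Re (\<phi> (star a * a))"
proof -
  define c where "c = \<phi> a"
  define b where "b = a - scaleC c 1"
  define t where "t = Re (\<phi> (star a * a))"
  have "\<phi> b = 0"
    by (simp add: b_def c_def phi_diff phi_scaleC phi_one)
  have "star b * b = star a * a - scaleC c (star a) - scaleC (cnj c) a + scaleC (cnj c * c) 1"
    by (simp add: b_def star_diff star_scaleC algebra_simps mult_scaleC_left mult_scaleC_right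
        scaleC_scaleC scaleC_diff_right)
  then have "\<phi> (star b * b) = \<phi> (star a * a) - c * cnj c - cnj c * c + cnj c * c"
    by (simp add: c_def phi_add phi_diff phi_scaleC phi_one phi_star)
  then have "Re (\<phi> (star b * b)) = t - (cmod c)\<^sup>2"
    using cmod_power2[of c] by (simp add: t_def power2_eq_square)
  then have "(cmod c)\<^sup>2 \<le> t" and "Re (\<phi> (star b * b)) \<le> t"
    using phi_star_mult_self_nonneg[of b] by auto
  then have "(norm b)\<^sup>2 \<le> R * t"
    using kernel[OF \<open>\<phi> b = 0\<close>] \<open>0 \<le> R\<close> by (metis mult_left_mono norm_star_mult_self order_trans)
  then have "norm b \<le> sqrt R * sqrt t"
    by (metis real_le_rsqrt real_sqrt_mult)
  moreover have "cmod c \<le> sqrt t"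
    using \<open>(cmod c)\<^sup>2 \<le> t\<close> by (simp add: real_le_rsqrt)
  moreover have "norm a \<le> norm b + cmod c"
    using norm_triangle_ineq[of b "scaleC c 1"] by (simp add: b_def norm_scaleC)
  ultimately have "norm a \<le> (sqrt R + 1) * sqrt t"
    by (simp add: algebra_simps)
  then have "(norm a)\<^sup>2 \<le> ((sqrt R + 1) * sqrt t)\<^sup>2"
    by (simp add: power_mono)
  also have "\<dots> = (sqrt R + 1)\<^sup>2 * t"
    using phi_star_mult_self_nonneg[of a] by (simp add: t_def power_mult_distrib)
  finally show ?thesis
    by (simp add: t_def)
qed

lemma convergent_phi_powers_square:
  assumes "selfadjoint h" and "norm h \<le> 1"
  shows "convergent (\<lambda>n. Re (\<phi> ((h * h) ^ n)))"
proof -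
  define p where "p = h * h"
  have p_power_h: "p ^ k = h ^ (2 * k)" for k
    by (simp add: p_def power_mult power2_eq_square)
  have p_power: "p ^ n = star (h ^ n) * h ^ n" for n
    using assms(1) by (simp add: p_power_h selfadjoint_def star_power mult_2 power_add)
  have p_power_Suc: "p ^ Suc n = star (h ^ n) * p * h ^ n" for n
  proof -
    have "2 * Suc n = n + 2 + n"
      by simp
    then have "p ^ Suc n = h ^ n * h\<^sup>2 * h ^ n"
      by (simp only: p_power_h power_add)
    also have "h\<^sup>2 = p"
      by (simp add: p_def power2_eq_square)
    finally show ?thesis
      using assms(1) by (simp only: selfadjoint_def star_power)
  qed
  have "norm p \<le> 1"
    using norm_mult_ineq[of h h] assms(2) mult_le_one[of "norm h" "norm h"] by (simp add: p_def)
  have "Re (\<phi> (p ^ Suc n)) \<le> Re (\<phi> (p ^ n))" for n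
  proof -
    have "selfadjoint p"
      using assms(1) by (simp add: p_def selfadjoint_def star_mult)
    then have "Re (\<phi> (p ^ Suc n)) \<le> norm p * Re (\<phi> (p ^ n))"
      unfolding p_power_Suc[of n] p_power[of n] by (rule phi_sandwich_le)
    also have "\<dots> \<le> Re (\<phi> (p ^ n))"
      using \<open>norm p \<le> 1\<close> phi_star_mult_self_nonneg[of "h ^ n"] p_power[of n]
      by (simp add: mult_left_le_one_le)
    finally show ?thesis .
  qed
  then have "decseq (\<lambda>n. Re (\<phi> (p ^ n)))"
    by (simp add: decseq_SucI)
  moreover have "0 \<le> Re (\<phi> (p ^ n))" for n
    by (simp add: p_power phi_star_mult_self_nonneg)
  ultimately show ?thesis
    unfolding p_def[symmetric] using decseq_convergent convergent_def by metis
qed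

end

locale norm_dominating_state = cstar_state +
  fixes K :: real
  assumes norm_sq_le_state: "(norm a)\<^sup>2 \<le> K * Re (\<phi> (star a * a))"
begin

lemma one_le_K: "1 \<le> K"
  using norm_sq_le_state[of 1] by (simp add: phi_one)

lemma norm_diff_powers_sq_le:
  assumes "selfadjoint p"
  shows "(norm (p ^ m - p ^ n))\<^sup>2 \<le>
    K * ((Re (\<phi> (p ^ (m + m))) - Re (\<phi> (p ^ (m + n)))) +
      (Re (\<phi> (p ^ (n + n))) - Re (\<phi> (p ^ (m + n)))))"
proof -
  have "star (p ^ m - p ^ n) * (p ^ m - p ^ n) = p ^ (m + m) - 2 *\<^sub>R p ^ (m + n) + p ^ (n + n)"
    using assms by (simp add: selfadjoint_def star_diff star_power algebra_simps scaleR_2 add.commute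
        flip: power_add)
  then have "Re (\<phi> (star (p ^ m - p ^ n) * (p ^ m - p ^ n)))
      = (Re (\<phi> (p ^ (m + m))) - Re (\<phi> (p ^ (m + n)))) +
        (Re (\<phi> (p ^ (n + n))) - Re (\<phi> (p ^ (m + n))))"
    by (simp add: phi_add phi_diff phi_scaleR)
  then show ?thesis
    using norm_sq_le_state[of "p ^ m - p ^ n"] by simp
qed

lemma Cauchy_powers_square:
  assumes "selfadjoint h" and "norm h \<le> 1"
  shows "Cauchy (\<lambda>n. (h * h) ^ n)"
proof (rule CauchyI)
  fix \<epsilon> :: real assume "0 < \<epsilon>"
  define p where "p = h * h"
  define a where "a n = Re (\<phi> (p ^ n))" for n
  have "Cauchy a"
    using convergent_phi_powers_square[OF assms] unfolding a_def p_def
    by (simp add: Cauchy_convergent_iff)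
  moreover have "0 < \<epsilon>\<^sup>2 / (2 * K)"
    using \<open>0 < \<epsilon>\<close> one_le_K by simp
  ultimately obtain M where M: "\<And>m n. M \<le> m \<Longrightarrow> M \<le> n \<Longrightarrow> \<bar>a m - a n\<bar> < \<epsilon>\<^sup>2 / (2 * K)"
    by (metis CauchyD real_norm_def)
  have "norm (p ^ m - p ^ n) < \<epsilon>" if "M \<le> m" "M \<le> n" for m n
  proof -
    have "selfadjoint p"
      using assms(1) by (simp add: p_def selfadjoint_def star_mult)
    then have "(norm (p ^ m - p ^ n))\<^sup>2 \<le> K * ((a (m + m) - a (m + n)) + (a (n + n) - a (m + n)))"
      unfolding a_def by (rule norm_diff_powers_sq_le)
    also have "\<dots> < K * (2 * (\<epsilon>\<^sup>2 / (2 * K)))"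
      using M[of "m + m" "m + n"] M[of "n + n" "m + n"] that one_le_K by (intro mult_strict_left_mono) auto
    also have "\<dots> = \<epsilon>\<^sup>2"
      using one_le_K by simp
    finally show ?thesis
      using \<open>0 < \<epsilon>\<close> by (simp add: power_less_imp_less_base)
  qed
  then show "\<exists>M. \<forall>m\<ge>M. \<forall>n\<ge>M. norm ((h * h) ^ m - (h * h) ^ n) < \<epsilon>"
    unfolding p_def by blast
qed

lemma power_limit_projection:
  assumes h: "selfadjoint h" "norm h = 1"
  obtains e where "projection e" "e \<noteq> 0" "h * h * e = e"
    and "\<And>q. q * (h * h) = h * h \<Longrightarrow> q * e = e"
proof -
  define p where "p = h * h"
  have "convergent (\<lambda>n. p ^ n)"
    using Cauchy_powers_square[of h] h by (simp add: p_def Cauchy_convergent_iff)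
  then obtain e where lim: "(\<lambda>n. p ^ n) \<longlonglongrightarrow> e"
    by (auto simp: convergent_def)
  have "selfadjoint p"
    using h(1) by (simp add: p_def selfadjoint_def star_mult)
  have "(\<lambda>n. star (p ^ n)) \<longlonglongrightarrow> star e"
    using bounded_linear.tendsto[OF bounded_linear_star lim] .
  then have "star e = e"
    using lim LIMSEQ_unique \<open>selfadjoint p\<close> by (simp add: selfadjoint_def star_power)
  then have "projection e"
    using power_limit_idempotent(1)[OF lim] by (simp add: projection_def)
  moreover have "e \<noteq> 0"
  proof
    assume "e = 0"
    then obtain M where "\<And>n. n \<ge> M \<Longrightarrow> norm (p ^ n) < 1"
      using lim unfolding LIMSEQ_iff by (metis diff_zero zero_less_one)
    then have "norm (p ^ (2 ^ M)) < 1"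
      using less_exp[of M] by simp
    moreover have "norm p = 1"
      using h norm_star_mult_self[of h] by (simp add: p_def selfadjoint_def)
    ultimately show False
      using norm_power_two_power[OF \<open>selfadjoint p\<close>] by simp
  qed
  moreover note power_limit_idempotent(2)[OF lim]
  ultimately show ?thesis
    using that power_limit_absorbs[OF lim] unfolding p_def by blast
qed

lemma corner_selfadjoint_splits:
  assumes q: "projection q" and k: "selfadjoint k" "k \<in> corner q q"
    and not_real: "\<And>r. k \<noteq> r *\<^sub>R q"
  obtains e1 e2 where "orthogonal_split q e1 e2"
proof -
  have "k \<noteq> 0"
    using not_real[of 0] by simp
  define h where "h = (1 / norm k) *\<^sub>R k"
  have k_h: "k = norm k *\<^sub>R h"
    using \<open>k \<noteq> 0\<close> by (simp add: h_def)
  have h: "selfadjoint h" "norm h = 1" "h \<in> corner q q"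
    using k \<open>k \<noteq> 0\<close> by (simp_all add: h_def selfadjoint_def star_scaleR corner_def)
  obtain e where e: "projection e" "e \<noteq> 0" "h * h * e = e"
    and absorbs: "\<And>q'. q' * (h * h) = h * h \<Longrightarrow> q' * e = e"
    using power_limit_projection[OF h(1,2)] by blast
  have "q * (h * h) = h * h"
    using h(3) by (simp add: corner_def flip: mult.assoc)
  then have "q * e = e"
    by (rule absorbs)
  show ?thesis
  proof (cases "e = q")
    case False
    with q e \<open>q * e = e\<close> show ?thesis
      using orthogonal_split_subprojection that by blast
  next
    case True
    have "h * h = q"
      using e(3) h(3) by (simp add: True corner_def mult.assoc)
    moreover have "h \<noteq> q" "h \<noteq> - q"
      using not_real[of "norm k"] not_real[of "- norm k"] k_h by auto
    ultimately show ?thesis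
      using q h orthogonal_split_reflection that by blast
  qed
qed

lemma card_projection_partition_le:
  assumes F: "projection_partition F"
  shows "real (card F) \<le> K"
proof -
  have "1 \<le> K * Re (\<phi> p)" if "p \<in> F" for p
  proof -
    have "projection p" "p \<noteq> 0"
      using F that by (auto simp: projection_partition_def)
    then show ?thesis
      using norm_sq_le_state[of p] norm_projection[of p] by (simp add: projection_def)
  qed
  then have "(\<Sum>p\<in>F. 1) \<le> (\<Sum>p\<in>F. K * Re (\<phi> p))"
    by (rule sum_mono)
  then have "real (card F) \<le> (\<Sum>p\<in>F. K * Re (\<phi> p))"
    by simp
  also have "\<dots> = K * Re (\<phi> (\<Sum>F))"
    by (simp add: phi_sum sum_distrib_left)
  also have "\<dots> = K"
    using F by (simp add: projection_partition_def phi_one)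
  finally show ?thesis .
qed

lemma maximal_projection_partition_exists:
  obtains F where "projection_partition F"
    and "\<And>G. projection_partition G \<Longrightarrow> card G \<le> card F"
proof -
  have "card G < nat \<lceil>K\<rceil> + 1" if "projection_partition G" for G
    using card_projection_partition_le[OF that] by linarith
  then show ?thesis
    using ex_has_greatest_nat[of projection_partition "{1}" card "nat \<lceil>K\<rceil> + 1"]
      projection_partition_one that by blast
qed

lemma maximal_projection_partition_corner:
  assumes F: "projection_partition F"
    and max: "\<And>G. projection_partition G \<Longrightarrow> card G \<le> card F"
    and "q \<in> F"
  shows "corner q q \<subseteq> complex_span scaleC {q}"
proof (rule corner_in_span_if_selfadjoint_real)
  show q: "projection q"
    using F \<open>q \<in> F\<close> by (simp add: projection_partition_def)
  fix k assume k: "selfadjoint k" "k \<in> corner q q"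
  show "\<exists>r. k = r *\<^sub>R q"
  proof (rule ccontr)
    assume "\<nexists>r. k = r *\<^sub>R q"
    then obtain e1 e2 where "orthogonal_split q e1 e2"
      using corner_selfadjoint_splits[OF q k] by blast
    from projection_partition_refine[OF F \<open>q \<in> F\<close> this] max show False
      by (metis Suc_n_not_le_n)
  qed
qed

theorem finite_dimensional: "\<not> infinite_dimensional scaleC"
proof -
  obtain F where F: "projection_partition F"
    and max: "\<And>G. projection_partition G \<Longrightarrow> card G \<le> card F"
    using maximal_projection_partition_exists by blast
  show ?thesis
  proof (rule finite_dimensional_if_corners_in_lines[OF F])
    fix p q assume "p \<in> F" "q \<in> F"
    with F show "\<exists>y. corner p q \<subseteq> complex_span scaleC {y}"
      by (intro corner_in_span_single maximal_projection_partition_corner[OF F max])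
        (auto simp: projection_partition_def)
  qed
qed

end

theorem lemma4p3:
  fixes scaleC :: "complex \<Rightarrow> 'a::{real_normed_algebra_1,banach} \<Rightarrow> 'a"
    and star :: "'a \<Rightarrow> 'a"
    and \<phi> :: "'a \<Rightarrow> complex"
  assumes "unital_cstar_algebra scaleC star"
    and "infinite_dimensional scaleC"
    and "is_state scaleC star \<phi>"
    and "gns_faithful star \<phi>"
  shows "\<not> (\<exists>R::real. R > 0 \<and>
            (\<forall>a. \<phi> a = 0 \<longrightarrow> norm (star a * a) \<le> R * Re (\<phi> (star a * a))))"
proof
  assume "\<exists>R::real. R > 0 \<and> (\<forall>a. \<phi> a = 0 \<longrightarrow> norm (star a * a) \<le> R * Re (\<phi> (star a * a)))"
  then obtain R where "R > 0"
    and kernel: "\<And>a. \<phi> a = 0 \<Longrightarrow> norm (star a * a) \<le> R * Re (\<phi> (star a * a))"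
    by blast
  interpret cstar_state scaleC star \<phi>
    using assms(1,3) by unfold_locales
  interpret norm_dominating_state scaleC star \<phi> "(sqrt R + 1)\<^sup>2"
    using norm_sq_le_of_kernel_bound[of R] \<open>R > 0\<close> kernel by unfold_locales auto
  show False
    using finite_dimensional assms(2) by blast
qed

end
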